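(* In each of the following cases there exists an ascending partition $\mathcal P=[p_1,\dots,p_k]\in AP_{n,k}$ with $p_1=\cdots=p_e=2$ and $p_{e+1}=\cdots=p_{e+f}=3$ (i.e. completing the partial partition $[2^e,3^f]$) such that $\mathcal P$ is non-equitable and $\mathrm{slack}(\mathcal P)\ge 0$: (a) $n=6t+3$, $k=2t+1$, $e=\frac32 t$, $f=2$, for every even $t\ge 6$; (b) $n=6t+3$, $k=2t+1$, $e=\frac32 t-\frac12$, $f=3$, for every odd $t\ge 7$; (c) $n=6t+2$, $k=2t+1$, $e=\frac32 t$, $f=3$, for every even $t\ge 10$; (d) $n=6t+2$, $k=2t+1$, $e=\frac32 t+\frac12$, $f=2$, for every odd $t\ge 11$.
   Context: $[n]=\{1,\ldots,n\}$ and $s^{n,k}=\frac{n(n+1)}{2k}$. An ascending partition of $n$ of size $k$ is a sequence of positive integers $[p_1,\ldots,p_k]$ with $p_1\le\cdots\le p_k$ and $\sum_i p_i=n$; $AP_{n,k}$ is the set of all such partitions when $s^{n,k}$ is an integer (and empty otherwise). $\mathcal P$ is equitable if $[n]$ can be partitioned into sets $A_1,\dots,A_k$ with $|A_i|=p_i$ all having the same element sum. For $j=1,\ldots,k$, $\mathrm{slack}_j(\mathcal P)=\sum_{i=1}^{p_1+\cdots+p_j}(n-i+1)-j\,s^{n,k}$, and $\mathrm{slack}(\mathcal P)=\min_{1\le j\le k-1}\mathrm{slack}_j(\mathcal P)$. *)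

theory Defs
  imports Complex_Main
begin

definition s_nk :: "nat \<Rightarrow> nat \<Rightarrow> rat" where
  "s_nk n k = of_nat (n * (n + 1)) / of_nat (2 * k)"

definition ascending_partition :: "nat \<Rightarrow> nat \<Rightarrow> nat list \<Rightarrow> bool" where
  "ascending_partition n k P \<longleftrightarrow>
     length P = k \<and> sorted P \<and> (\<forall>p\<in>set P. 0 < p) \<and> sum_list P = n"

definition AP :: "nat \<Rightarrow> nat \<Rightarrow> nat list set" where
  "AP n k = (if s_nk n k \<in> \<int> then {P. ascending_partition n k P} else {})"

text \<open>Equitable: [n] splits into sets A_1..A_k (indexed 0..k-1) with |A_i| = p_i and equal sums.\<close>
definition equitable :: "nat \<Rightarrow> nat list \<Rightarrow> bool" where
  "equitable n P \<longleftrightarrow>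
     (\<exists>A :: nat \<Rightarrow> nat set.
        (\<Union>i<length P. A i) = {1..n} \<and>
        (\<forall>i<length P. \<forall>j<length P. i \<noteq> j \<longrightarrow> A i \<inter> A j = {}) \<and>
        (\<forall>i<length P. card (A i) = P ! i) \<and>
        (\<forall>i<length P. \<forall>j<length P. \<Sum>(A i) = \<Sum>(A j)))"

definition slack_j :: "nat \<Rightarrow> nat list \<Rightarrow> nat \<Rightarrow> rat" where
  "slack_j n P j =
     (\<Sum>i = 1..sum_list (take j P). (of_nat n - of_nat i + 1 :: rat))
       - of_nat j * s_nk n (length P)"

definition slack :: "nat \<Rightarrow> nat list \<Rightarrow> rat" where
  "slack n P = Min ((\<lambda>j. slack_j n P j) ` {1..length P - 1})"

end

theory Submission
  imports Defs
begin

text \<open>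
  The witness completes \<open>[2^e, 3^f]\<close> by parts \<open>6\<close> and one final part \<open>l\<close>; write
  \<open>S = s^{n,k}\<close>. If the first \<open>j\<close> parts sum to \<open>L\<close>, then
  \<open>2 slack_j = L(2n - L + 1) - 2jS\<close>, which along a run of equal parts is a concave
  quadratic in \<open>j\<close>; so it suffices to check it at the ends of the three runs, and at the
  last one it equals \<open>2S - l(l + 1)\<close>.

  Non-equitability is a counting argument in \<open>T = [S - n, n]\<close>: a class \<open>{x, y}\<close> with
  sum \<open>S\<close> lies in \<open>T\<close>, and a class of three numbers below \<open>S - n\<close> would sum to at most
  \<open>3(S - n) - 6 < S\<close>. The disjoint classes would thus need \<open>2e + f\<close> elements of \<open>T\<close>,
  but \<open>T\<close> has fewer.
\<close>

lemma sum_largest_elements: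
  "(\<Sum>i = 1..L. (of_nat n - of_nat i + 1 :: rat)) = of_int (int L * (2 * int n - int L + 1)) / 2"
  by (induction L) (auto simp: field_simps)

definition double_slack :: "nat \<Rightarrow> nat \<Rightarrow> nat \<Rightarrow> nat \<Rightarrow> int" where
  "double_slack n S L j = int L * (2 * int n - int L + 1) - 2 * int j * int S"

lemma s_nk_eq:
  assumes "n * (n + 1) = 2 * k * S" and "0 < k"
  shows "s_nk n k = of_nat S"
proof -
  have "s_nk n k = of_nat (2 * k * S) / of_nat (2 * k)"
    unfolding s_nk_def assms(1) ..
  also have "\<dots> = of_nat S"
    using assms(2) by (simp add: field_simps)
  finally show ?thesis .
qed

lemma slack_j_eq_double_slack:
  assumes "s_nk n (length P) = of_nat S"
  shows "slack_j n P j = of_int (double_slack n S (sum_list (take j P)) j) / 2"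
  unfolding slack_j_def sum_largest_elements assms double_slack_def by (simp add: field_simps)

lemma slack_nonneg_if_slack_j_nonneg:
  assumes "2 \<le> length P" and "\<And>j. 1 \<le> j \<Longrightarrow> j < length P \<Longrightarrow> 0 \<le> slack_j n P j"
  shows "0 \<le> slack n P"
  unfolding slack_def using assms by (subst Min_ge_iff) auto

lemma concave_quadratic_nonneg_between:
  fixes A B C x a :: "'a::linordered_idom"
  assumes "0 \<le> C" "0 \<le> x" "x \<le> a" "0 \<le> A" "0 \<le> A + B * a - C * a\<^sup>2"
  shows "0 \<le> A + B * x - C * x\<^sup>2"
proof (cases "a = 0")
  case True
  then show ?thesis using assms by simp
next
  case False
  have "a * (A + B * x - C * x\<^sup>2) = (a - x) * A + x * (A + B * a - C * a\<^sup>2) + C * a * x * (a - x)"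
    by (simp add: algebra_simps power2_eq_square)
  also have "\<dots> \<ge> 0"
    using assms by (intro add_nonneg_nonneg mult_nonneg_nonneg) auto
  finally show ?thesis
    using False assms by (simp add: zero_le_mult_iff)
qed

lemma double_slack_nonneg_on_run:
  assumes P: "P = Q @ replicate a c @ R" and "length Q \<le> j" "j \<le> length Q + a"
    and start: "0 \<le> double_slack n S (sum_list Q) (length Q)"
    and stop: "0 \<le> double_slack n S (sum_list Q + c * a) (length Q + a)"
  shows "0 \<le> double_slack n S (sum_list (take j P)) j"
proof -
  obtain i where j: "j = length Q + i" and "i \<le> a"
    using assms(2,3) le_Suc_ex by (metis add_le_cancel_left)
  have prefix: "sum_list (take (length Q + i) P) = sum_list Q + c * i"
    using P \<open>i \<le> a\<close> by (simp add: sum_list_replicate)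
  let ?B = "int c * (2 * int n - 2 * int (sum_list Q) + 1) - 2 * int S"
  have quadratic: "double_slack n S (sum_list Q + c * x) (length Q + x)
      = double_slack n S (sum_list Q) (length Q) + ?B * int x - (int c)\<^sup>2 * (int x)\<^sup>2" for x
    by (simp add: double_slack_def algebra_simps power2_eq_square)
  show ?thesis
    using start stop \<open>i \<le> a\<close> concave_quadratic_nonneg_between[of "(int c)\<^sup>2" "int i" "int a"]
    unfolding j prefix quadratic by simp
qed

lemma double_slack_before_last:
  assumes "n * (n + 1) = 2 * k * S" "l \<le> n" "0 < k"
  shows "double_slack n S (n - l) (k - 1) = 2 * int S - int l * (int l + 1)"
proof -
  have "int n * (int n + 1) = 2 * int k * int S"
    using arg_cong[OF assms(1), of int] by (simp add: algebra_simps)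
  then show ?thesis
    using assms(2,3) by (simp add: double_slack_def of_nat_diff algebra_simps)
qed

lemma equitableE:
  assumes "equitable n P" and "P \<noteq> []" and "n * (n + 1) = 2 * length P * S"
  obtains A where "\<And>i. i < length P \<Longrightarrow> A i \<subseteq> {1..n}"
    and "\<And>i j. i < length P \<Longrightarrow> j < length P \<Longrightarrow> i \<noteq> j \<Longrightarrow> A i \<inter> A j = {}"
    and "\<And>i. i < length P \<Longrightarrow> card (A i) = P ! i"
    and "\<And>i. i < length P \<Longrightarrow> \<Sum>(A i) = S"
proof -
  let ?k = "length P"
  obtain A where U: "(\<Union>i<?k. A i) = {1..n}"
    and D: "\<forall>i<?k. \<forall>j<?k. i \<noteq> j \<longrightarrow> A i \<inter> A j = {}"
    and C: "\<forall>i<?k. card (A i) = P ! i"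
    and E: "\<forall>i<?k. \<forall>j<?k. \<Sum>(A i) = \<Sum>(A j)"
    using assms(1) unfolding equitable_def by blast
  have k: "0 < ?k"
    using assms(2) by simp
  have sub: "A i \<subseteq> {1..n}" if "i < ?k" for i
    using U that by blast
  have "\<Sum>{1..n} = (\<Sum>i<?k. \<Sum>(A i))"
    unfolding U[symmetric]
  proof (rule sum.UNION_disjoint)
    show "\<forall>i\<in>{..<?k}. finite (A i)"
      using sub finite_subset by blast
    show "\<forall>i\<in>{..<?k}. \<forall>j\<in>{..<?k}. i \<noteq> j \<longrightarrow> A i \<inter> A j = {}"
      using D by blast
  qed simp
  also have "\<dots> = (\<Sum>i<?k. \<Sum>(A 0))"
    by (rule sum.cong[OF refl]) (use E k in blast)
  finally have "n * (n + 1) = 2 * (?k * \<Sum>(A 0))"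
    using double_gauss_sum_from_Suc_0[of n, where ?'a = nat] by simp
  with assms(3) k have "\<Sum>(A 0) = S"
    by simp
  then have sums: "\<Sum>(A i) = S" if "i < ?k" for i
    using E[rule_format, OF that k] by simp
  show thesis
    by (rule that[of A]) (use sub D C sums in auto)
qed

lemma pair_with_sum_subset:
  fixes A :: "nat set"
  assumes "A \<subseteq> {1..n}" "card A = 2" "\<Sum>A = S"
  shows "A \<subseteq> {S - n..n}"
proof -
  obtain x y where A: "A = {x, y}" "x \<noteq> y"
    using assms(2) unfolding card_2_iff by blast
  then show ?thesis
    using assms(1,3) by auto
qed

lemma triple_with_sum_meets:
  fixes A :: "nat set"
  assumes "A \<subseteq> {1..n}" "card A = 3" "\<Sum>A = S" and "2 * S < 3 * n + 6"
  shows "A \<inter> {S - n..n} \<noteq> {}"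
proof
  assume disjoint: "A \<inter> {S - n..n} = {}"
  obtain x y z where A: "A = {x, y, z}" and distinct: "x \<noteq> y" "y \<noteq> z" "x \<noteq> z"
    using assms(2) unfolding card_3_iff by blast
  then have "x < S - n" "y < S - n" "z < S - n"
    using assms(1) disjoint by auto
  then have "x + y + z + 6 \<le> 3 * (S - n)"
    using distinct by linarith
  moreover have "x + y + z = S"
    using assms(3) A distinct by simp
  ultimately show False
    using assms(4) by linarith
qed

lemma sum_card_Int_le_card:
  assumes "finite I" "finite T" "\<And>i j. i \<in> I \<Longrightarrow> j \<in> I \<Longrightarrow> i \<noteq> j \<Longrightarrow> A i \<inter> A j = {}"
  shows "(\<Sum>i\<in>I. card (A i \<inter> T)) \<le> card T"
proof -
  have "(\<Sum>i\<in>I. card (A i \<inter> T)) = card (\<Union>i\<in>I. A i \<inter> T)"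
    using assms by (subst card_UN_disjoint) auto
  also have "\<dots> \<le> card T"
    using assms(2) by (intro card_mono) auto
  finally show ?thesis .
qed

lemma not_equitable_if_few_large_numbers:
  assumes P: "P = replicate e 2 @ replicate f 3 @ Q"
    and nS: "n * (n + 1) = 2 * length P * S"
    and S_le: "S \<le> 2 * n + 1" and triples: "2 * S < 3 * n + 6"
    and too_few: "2 * n + 1 < S + 2 * e + f"
  shows "\<not> equitable n P"
proof
  assume "equitable n P"
  moreover have "P \<noteq> []"
    using P S_le too_few by auto
  ultimately obtain A where sub: "\<And>i. i < length P \<Longrightarrow> A i \<subseteq> {1..n}"
    and disj: "\<And>i j. i < length P \<Longrightarrow> j < length P \<Longrightarrow> i \<noteq> j \<Longrightarrow> A i \<inter> A j = {}"
    and card: "\<And>i. i < length P \<Longrightarrow> card (A i) = P ! i"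
    and sums: "\<And>i. i < length P \<Longrightarrow> \<Sum>(A i) = S"
    using nS equitableE by metis
  define T where "T = {S - n..n}"
  have len: "e + f \<le> length P"
    using P by simp
  have pairs_in_T: "card (A i \<inter> T) = 2" if "i < e" for i
  proof -
    have "i < length P" "P ! i = 2"
      using that len P by (simp_all add: nth_append)
    then have "A i \<inter> T = A i" "card (A i) = 2"
      using pair_with_sum_subset sub sums card unfolding T_def by (metis inf.absorb1)+
    then show ?thesis
      by simp
  qed
  have triples_meet_T: "1 \<le> card (A i \<inter> T)" if "e \<le> i" "i < e + f" for i
  proof -
    have "i < length P" "P ! i = 3"
      using that len P by (auto simp: nth_append)
    then have "A i \<inter> T \<noteq> {}"
      using triple_with_sum_meets triples sub sums card unfolding T_def by metis
    then show ?thesis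
      by (simp add: Suc_le_eq card_gt_0_iff T_def)
  qed
  have "2 * e + f \<le> (\<Sum>i<e. card (A i \<inter> T)) + (\<Sum>i\<in>{e..<e + f}. card (A i \<inter> T))"
    using sum_bounded_below[of "{e..<e + f}" 1 "\<lambda>i. card (A i \<inter> T)"] triples_meet_T pairs_in_T
    by simp
  also have "\<dots> = (\<Sum>i<e + f. card (A i \<inter> T))"
    by (subst sum.union_disjoint[symmetric]) (auto intro: sum.cong)
  also have "\<dots> \<le> card T"
    using disj len by (intro sum_card_Int_le_card) (auto simp: T_def)
  finally show False
    using S_le too_few by (simp add: T_def)
qed

lemma slack_nonneg_of_runs_2_3_6:
  assumes P: "P = replicate e 2 @ replicate f 3 @ replicate a 6 @ [l]"
    and n: "n = sum_list P" and nS: "n * (n + 1) = 2 * length P * S" and "0 < e + f"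
    and first_run: "S + 2 * e \<le> 2 * n + 1"
    and second_run: "0 \<le> double_slack n S (2 * e + 3 * f) (e + f)"
    and last_part: "l * (l + 1) \<le> 2 * S"
  shows "0 \<le> slack n P"
proof (rule slack_nonneg_if_slack_j_nonneg)
  show "2 \<le> length P"
    using P \<open>0 < e + f\<close> by auto
  have "double_slack n S (2 * e) e = 2 * int e * (2 * int n + 1 - 2 * int e - int S)"
    by (simp add: double_slack_def algebra_simps)
  moreover have "0 \<le> 2 * int n + 1 - 2 * int e - int S"
    using first_run by linarith
  ultimately have first_end: "0 \<le> double_slack n S (2 * e) e"
    by simp
  have "int (l * (l + 1)) \<le> int (2 * S)"
    using last_part by (simp only: of_nat_le_iff)
  then have last_end: "0 \<le> double_slack n S (2 * e + 3 * f + 6 * a) (e + f + a)"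
    using double_slack_before_last[OF nS, of l] P n by (simp add: sum_list_replicate algebra_simps)
  fix j assume "1 \<le> j" "j < length P"
  then consider "j \<le> e" | "e \<le> j" "j \<le> e + f" | "e + f \<le> j" "j \<le> e + f + a"
    using P by fastforce
  then have "0 \<le> double_slack n S (sum_list (take j P)) j"
  proof cases
    case 1
    then show ?thesis
      using first_end by (intro double_slack_nonneg_on_run[where Q="[]" and c=2 and a=e])
        (simp_all add: P double_slack_def)
  next
    case 2
    then show ?thesis
      using first_end second_run
      by (intro double_slack_nonneg_on_run[where Q="replicate e 2" and c=3 and a=f])
        (simp_all add: P sum_list_replicate mult.commute)
  next
    case 3
    then show ?thesis
      using second_run last_end
      by (intro double_slack_nonneg_on_run[where Q="replicate e 2 @ replicate f 3" and c=6 and a=a])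
        (simp_all add: P sum_list_replicate mult.commute)
  qed
  then show "0 \<le> slack_j n P j"
    using s_nk_eq[OF nS] P by (simp add: slack_j_eq_double_slack)
qed

lemma exists_nonequitable_completion_with_sixes:
  fixes n k S e f a l :: nat
  assumes n: "n = 2 * e + 3 * f + 6 * a + l" and k: "k = e + f + a + 1" and "6 \<le> l"
    and nS: "n * (n + 1) = 2 * k * S"
    and first_run: "S + 2 * e \<le> 2 * n + 1"
    and triples: "2 * S < 3 * n + 6" and count: "2 * n + 1 < S + 2 * e + f"
    and second_run: "0 \<le> double_slack n S (2 * e + 3 * f) (e + f)"
    and last_part: "l * (l + 1) \<le> 2 * S"
  shows "\<exists>P\<in>AP n k. take e P = replicate e 2 \<and> take f (drop e P) = replicate f 3
           \<and> \<not> equitable n P \<and> 0 \<le> slack n P"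
proof -
  define P where "P = replicate e 2 @ replicate f 3 @ replicate a 6 @ [l]"
  have len: "length P = k" and sum: "sum_list P = n"
    using k n by (simp_all add: P_def sum_list_replicate)
  have "P \<in> AP n k"
    using \<open>6 \<le> l\<close> len sum s_nk_eq[OF nS] k unfolding AP_def ascending_partition_def
    by (auto simp: P_def sorted_append)
  moreover have "\<not> equitable n P"
    using first_run triples count nS[folded len]
    by (intro not_equitable_if_few_large_numbers[OF P_def]) simp_all
  moreover have "0 \<le> slack n P"
    using first_run count second_run last_part nS[folded len] sum[symmetric]
    by (intro slack_nonneg_of_runs_2_3_6[OF P_def]) simp_all
  moreover have "take e P = replicate e 2" "take f (drop e P) = replicate f 3"
    by (simp_all add: P_def)
  ultimately show ?thesis
    by blast
qed

theorem mainTheorem3: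
  shows
   "(\<forall>t::nat. even t \<and> t \<ge> 6 \<longrightarrow>
       (\<exists>P \<in> AP (6*t+3) (2*t+1).
          take (3*t div 2) P = replicate (3*t div 2) 2 \<and>
          take 2 (drop (3*t div 2) P) = replicate 2 3 \<and>
          \<not> equitable (6*t+3) P \<and> slack (6*t+3) P \<ge> 0))
  \<and> (\<forall>t::nat. odd t \<and> t \<ge> 7 \<longrightarrow>
       (\<exists>P \<in> AP (6*t+3) (2*t+1).
          take ((3*t - 1) div 2) P = replicate ((3*t - 1) div 2) 2 \<and>
          take 3 (drop ((3*t - 1) div 2) P) = replicate 3 3 \<and>
          \<not> equitable (6*t+3) P \<and> slack (6*t+3) P \<ge> 0))
  \<and> (\<forall>t::nat. even t \<and> t \<ge> 10 \<longrightarrow>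
       (\<exists>P \<in> AP (6*t+2) (2*t+1).
          take (3*t div 2) P = replicate (3*t div 2) 2 \<and>
          take 3 (drop (3*t div 2) P) = replicate 3 3 \<and>
          \<not> equitable (6*t+2) P \<and> slack (6*t+2) P \<ge> 0))
  \<and> (\<forall>t::nat. odd t \<and> t \<ge> 11 \<longrightarrow>
       (\<exists>P \<in> AP (6*t+2) (2*t+1).
          take ((3*t + 1) div 2) P = replicate ((3*t + 1) div 2) 2 \<and>
          take 2 (drop ((3*t + 1) div 2) P) = replicate 2 3 \<and>
          \<not> equitable (6*t+2) P \<and> slack (6*t+2) P \<ge> 0))"
  apply (intro conjI allI impI)
  subgoal premises t_case for t
  proof -
    obtain v where t: "t = 2 * v + 6"
      by (rule that[of "t div 2 - 3"]) (use t_case in presburger)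
    show ?thesis
      unfolding t
      by (rule exists_nonequitable_completion_with_sixes[where a="v + 1" and l=9 and S="9 * t + 6"])
        (simp_all add: t double_slack_def algebra_simps)
  qed
  subgoal premises t_case for t
  proof -
    obtain v where t: "t = 2 * v + 7"
      by (rule that[of "t div 2 - 3"]) (use t_case in presburger)
    show ?thesis
      unfolding t
      by (rule exists_nonequitable_completion_with_sixes[where a="v + 1" and l=10 and S="9 * t + 6"])
        (simp_all add: t double_slack_def algebra_simps)
  qed
  subgoal premises t_case for t
  proof -
    obtain v where t: "t = 2 * v + 10"
      by (rule that[of "t div 2 - 5"]) (use t_case in presburger)
    show ?thesis
      unfolding t
      by (rule exists_nonequitable_completion_with_sixes[where a="v + 2" and l=11 and S="9 * t + 3"])
        (simp_all add: t double_slack_def algebra_simps)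
  qed
  subgoal premises t_case for t
  proof -
    obtain v where t: "t = 2 * v + 11"
      by (rule that[of "t div 2 - 5"]) (use t_case in presburger)
    show ?thesis
      unfolding t
      by (rule exists_nonequitable_completion_with_sixes[where a="v + 3" and l=10 and S="9 * t + 3"])
        (simp_all add: t double_slack_def algebra_simps)
  qed
  done

end
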